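(* Let $I\ge1$ and $B\ge1$ be integers. For real weights $b_{-B},\dots,b_B$ call the $I\times I$ matrix $\mathbf{B}$ defined by $(\mathbf{B}\mathbf{f})_i=\sum_{j=-B}^{B}b_j\,\mathrm{f}_{i+j}$ (indices taken periodically modulo $I$) a periodic convolution matrix; call it zero-sum if $\sum_{j=-B}^{B}b_j=0$ (e.g. when $b_j=\tilde b_j-\frac{1}{2B+1}\sum_{k=-B}^B\tilde b_k$ for arbitrary $\tilde b$). For $m=1,2,3$ let $$\mathcal{B}_m=\begin{bmatrix}\mathbf{B}_m^{11}&\mathbf{B}_m^{12}\\ \mathbf{B}_m^{21}&\mathbf{B}_m^{22}\end{bmatrix}\in\mathbb{R}^{2I\times2I},$$ where each $\mathbf{B}_m^{jl}$ is a periodic convolution matrix and $\mathbf{B}_m^{11},\mathbf{B}_m^{21}$ are zero-sum, for $m=1,2,3$. Let $\boldsymbol{\Omega}\in\mathbb{R}^{I\times I}$ be diagonal with positive entries, $\boldsymbol{\Omega}_2=\mathrm{diag}(\boldsymbol{\Omega},\boldsymbol{\Omega})$, and let $f_H:\mathbb{R}^I\to\mathbb{R}^I$ satisfy $\mathbf{1}_I^T\boldsymbol{\Omega}f_H(\bar{\mathbf{u}})=0$ for all $\bar{\mathbf{u}}$. Let $\mathbf{k}(\mathbf{a}),\mathbf{q}(\mathbf{a})\in\mathbb{R}^{2I\times 2I}$ be arbitrary diagonal matrices depending on $\mathbf{a}$. For $\mathbf{a}=(\bar{\mathbf{u}},\mathbf{s})\in\mathbb{R}^{2I}$ set $$\mathcal{G}(\mathbf{a})=\begin{bmatrix}f_H(\bar{\mathbf{u}})\\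 \mathbf{0}\end{bmatrix}+\boldsymbol{\Omega}_2^{-1}\big(\mathcal{B}_2^T\mathbf{k}(\mathbf{a})\mathcal{B}_3-\mathcal{B}_3^T\mathbf{k}(\mathbf{a})\mathcal{B}_2\big)\mathbf{a}-\boldsymbol{\Omega}_2^{-1}\mathcal{B}_1^T\mathbf{q}(\mathbf{a})^2\mathcal{B}_1\mathbf{a}.$$ Then for every $\mathbf{a}$, $\begin{bmatrix}\mathbf{1}_I\\ \mathbf{0}\end{bmatrix}^T\boldsymbol{\Omega}_2\,\mathcal{G}(\mathbf{a})=0$; consequently along any solution of $\frac{d\mathbf{a}}{dt}=\mathcal{G}(\mathbf{a})$ the discrete momentum $\mathbf{1}_I^T\boldsymbol{\Omega}\bar{\mathbf{u}}$ is constant in time, for all values of the weights and of $\mathbf{k},\mathbf{q}$.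
   Context: This is the structure-preserving closure model with periodic boundary conditions: $\bar{\mathbf{u}}$ is the coarse-grid filtered solution, $\mathbf{s}$ auxiliary subgrid-scale variables, $f_H$ a momentum-conserving coarse-grid discretization, and $\mathbf{k},\mathbf{q}$ are diagonal fields produced by a neural network. $\mathbf{1}_I$ is the all-ones vector in $\mathbb{R}^I$. *)

theory Defs
  imports Complex_Main "Jordan_Normal_Form.Matrix"
begin

definition conv_mat :: "nat \<Rightarrow> nat \<Rightarrow> (int \<Rightarrow> real) \<Rightarrow> real mat" where
  "conv_mat I B b = mat I I (\<lambda>(i,l).
      \<Sum>j\<in>{- int B..int B}. if (int i + j) mod int I = int l then b j else 0)"

definition zero_sum :: "nat \<Rightarrow> (int \<Rightarrow> real) \<Rightarrow> bool" where
  "zero_sum B b \<longleftrightarrow> (\<Sum>j\<in>{- int B..int B}. b j) = 0"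

definition block_conv :: "nat \<Rightarrow> nat \<Rightarrow> (nat \<Rightarrow> nat \<Rightarrow> int \<Rightarrow> real) \<Rightarrow> real mat" where
  "block_conv I B w = four_block_mat
     (conv_mat I B (w 1 1)) (conv_mat I B (w 1 2))
     (conv_mat I B (w 2 1)) (conv_mat I B (w 2 2))"

definition ones_vec :: "nat \<Rightarrow> real vec" where
  "ones_vec n = vec n (\<lambda>_. 1)"

definition Omega2 :: "nat \<Rightarrow> real mat \<Rightarrow> real mat" where
  "Omega2 I Om = four_block_mat Om (0\<^sub>m I I) (0\<^sub>m I I) Om"

definition diag_inv :: "real mat \<Rightarrow> real mat" where
  "diag_inv D = mat (dim_row D) (dim_col D) (\<lambda>(i,j). if i = j then 1 / D $$ (i,i) else 0)"

definition closure_rhs ::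
  "nat \<Rightarrow> nat \<Rightarrow> (nat \<Rightarrow> nat \<Rightarrow> nat \<Rightarrow> int \<Rightarrow> real) \<Rightarrow> real mat \<Rightarrow>
   (real vec \<Rightarrow> real vec) \<Rightarrow> (real vec \<Rightarrow> real mat) \<Rightarrow> (real vec \<Rightarrow> real mat) \<Rightarrow>
   real vec \<Rightarrow> real vec" where
  "closure_rhs I B w Om fH k q a =
     (let B1 = block_conv I B (w 1); B2 = block_conv I B (w 2); B3 = block_conv I B (w 3);
          Oi = diag_inv (Omega2 I Om)
      in (fH (vec_first a I) @\<^sub>v 0\<^sub>v I)
         + Oi *\<^sub>v ((transpose_mat B2 * k a * B3 - transpose_mat B3 * k a * B2) *\<^sub>v a)
         - Oi *\<^sub>v ((transpose_mat B1 * (q a * q a) * B1) *\<^sub>v a))"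

end

theory Submission
  imports Defs
begin

text \<open>With \<open>e = [1\<^sub>I; 0]\<close>, the zero-sum hypotheses say exactly that every \<open>\<B>\<^sub>m\<close> annihilates \<open>e\<close>,
  so \<open>e\<^sup>T \<B>\<^sub>m\<^sup>T = 0\<close> and \<open>e\<close> is orthogonal to every term of \<open>\<Omega>\<^sub>2 \<G>(a)\<close> that begins with some
  \<open>\<B>\<^sub>m\<^sup>T\<close>, whatever \<open>k\<close> and \<open>q\<close> are; the remaining term \<open>e\<^sup>T \<Omega>\<^sub>2 [f\<^sub>H; 0] = 1\<^sup>T \<Omega> f\<^sub>H\<close> vanishes
  by assumption. The momentum \<open>e\<^sup>T \<Omega>\<^sub>2 a\<close> is a linear functional of \<open>a\<close>, so its time derivative
  along a solution is \<open>e\<^sup>T \<Omega>\<^sub>2 \<G>(a) = 0\<close>.\<close>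

lemma scalar_prod_constant_if_derivative_orthogonal:
  fixes a a' :: "real \<Rightarrow> real vec" and c :: "real vec"
  assumes "t0 \<le> t1" and c: "c \<in> carrier_vec n"
    and deriv: "\<And>t i. t \<in> {t0..t1} \<Longrightarrow> i < n \<Longrightarrow>
                  ((\<lambda>s. a s $ i) has_real_derivative a' t $ i) (at t within {t0..t1})"
    and orth: "\<And>t. t \<in> {t0..t1} \<Longrightarrow> a' t \<bullet> c = 0"
  shows "a t1 \<bullet> c = a t0 \<bullet> c"
proof -
  define f where "f s = a s \<bullet> c" for s
  have f_sum: "f = (\<lambda>s. \<Sum>i\<in>{0..<n}. a s $ i * c $ i)"
    using c by (auto simp: f_def scalar_prod_def)
  have f': "(f has_real_derivative 0) (at t within {t0..t1})" if t: "t \<in> {t0..t1}" for t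
  proof -
    have "((\<lambda>s. \<Sum>i\<in>{0..<n}. a s $ i * c $ i) has_real_derivative
            (\<Sum>i\<in>{0..<n}. a' t $ i * c $ i)) (at t within {t0..t1})"
      using deriv[OF t] by (intro DERIV_sum DERIV_cmult_right) auto
    then show ?thesis
      using orth[OF t] c by (simp add: f_sum scalar_prod_def)
  qed
  show ?thesis
  proof (cases "t0 = t1")
    case False
    then have "t0 < t1" using \<open>t0 \<le> t1\<close> by simp
    then have "f t1 = f t0"
    proof (rule DERIV_isconst_end)
      show "continuous_on {t0..t1} f"
        using f' by (rule DERIV_continuous_on)
      show "DERIV f x :> 0" if "t0 < x" "x < t1" for x
        using f'[of x] that at_within_Icc_at[of t0 x t1] by simp
    qed
    then show ?thesis by (simp add: f_def)
  qed simp
qed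

lemma conv_mat_carrier [simp]: "conv_mat I B b \<in> carrier_mat I I"
  unfolding conv_mat_def by simp

lemma block_conv_carrier [simp]: "block_conv I B w \<in> carrier_mat (2*I) (2*I)"
  unfolding block_conv_def mult_2 by (rule four_block_carrier_mat) simp_all

lemma ones_vec_carrier [simp]: "ones_vec I \<in> carrier_vec I"
  unfolding ones_vec_def by simp

lemma vec_first_append [simp]: "v \<in> carrier_vec n \<Longrightarrow> vec_first (v @\<^sub>v w) n = v"
  by (rule eq_vecI) (auto simp: vec_first_def)

lemma conv_mat_mult_ones_vec:
  assumes "zero_sum B b"
  shows "conv_mat I B b *\<^sub>v ones_vec I = 0\<^sub>v I"
proof (rule eq_vecI)
  fix i assume "i < dim_vec (0\<^sub>v I :: real vec)"
  then have i: "i < I" by simp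
  have row_sum: "(\<Sum>l<I. if (int i + j) mod int I = int l then b j else 0) = b j" for j
  proof -
    have "(\<Sum>l<I. if (int i + j) mod int I = int l then b j else 0)
        = (\<Sum>l<I. if l = nat ((int i + j) mod int I) then b j else 0)"
      by (rule sum.cong) auto
    also have "\<dots> = b j"
      using i by (simp add: sum.delta' nat_less_iff)
    finally show ?thesis .
  qed
  have "(conv_mat I B b *\<^sub>v ones_vec I) $ i =
      (\<Sum>l<I. \<Sum>j\<in>{- int B..int B}. if (int i + j) mod int I = int l then b j else 0)"
    using i unfolding conv_mat_def ones_vec_def mult_mat_vec_def scalar_prod_def
    by (simp add: lessThan_atLeast0)
  also have "\<dots> = (\<Sum>j\<in>{- int B..int B}. b j)"
    by (subst sum.swap) (simp add: row_sum)
  also have "\<dots> = 0"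
    using assms unfolding zero_sum_def .
  finally show "(conv_mat I B b *\<^sub>v ones_vec I) $ i = 0\<^sub>v I $ i"
    using i by simp
qed (simp add: conv_mat_def)

lemma block_conv_mult_ones_append_zero:
  assumes "zero_sum B (w 1 1)" "zero_sum B (w 2 1)"
  shows "block_conv I B w *\<^sub>v (ones_vec I @\<^sub>v 0\<^sub>v I) = 0\<^sub>v (2*I)"
proof -
  have "conv_mat I B b *\<^sub>v 0\<^sub>v I = 0\<^sub>v I" for b
    by (rule eq_vecI) (auto simp: conv_mat_def)
  then have "block_conv I B w *\<^sub>v (ones_vec I @\<^sub>v 0\<^sub>v I) = (0\<^sub>v I + 0\<^sub>v I) @\<^sub>v (0\<^sub>v I + 0\<^sub>v I)"
    unfolding block_conv_def
    by (subst four_block_mat_mult_vec[of _ I I _ I _ I])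
      (simp_all only: conv_mat_carrier ones_vec_carrier zero_carrier_vec
        conv_mat_mult_ones_vec[OF assms(1)] conv_mat_mult_ones_vec[OF assms(2)])
  also have "\<dots> = 0\<^sub>v (2*I)"
    by (rule eq_vecI) auto
  finally show ?thesis .
qed

lemma scalar_prod_transpose_mult_eq_0:
  fixes A P C :: "'a :: comm_semiring_0 mat"
  assumes A: "A \<in> carrier_mat m n" and P: "P \<in> carrier_mat m p" and C: "C \<in> carrier_mat p r"
    and e: "e \<in> carrier_vec n" and x: "x \<in> carrier_vec r"
    and kernel: "A *\<^sub>v e = 0\<^sub>v m"
  shows "e \<bullet> ((transpose_mat A * P * C) *\<^sub>v x) = 0"
proof -
  have y: "P *\<^sub>v (C *\<^sub>v x) \<in> carrier_vec m"
    using P C x by simp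
  have "e \<bullet> ((transpose_mat A * P * C) *\<^sub>v x) = e \<bullet> (transpose_mat A *\<^sub>v (P *\<^sub>v (C *\<^sub>v x)))"
    using A P C x by (simp add: assoc_mult_mat_vec[of _ n m _ r] assoc_mult_mat_vec[of P m p C r])
  also have "\<dots> = (A *\<^sub>v e) \<bullet> (P *\<^sub>v (C *\<^sub>v x))"
    using transpose_vec_mult_scalar[OF _ y e, of "transpose_mat A"] A by simp
  also have "\<dots> = 0"
    using kernel y by simp
  finally show ?thesis .
qed

lemma mult_diag_inv:
  assumes D: "D \<in> carrier_mat n n" "diagonal_mat D" and nz: "\<And>i. i < n \<Longrightarrow> D $$ (i,i) \<noteq> 0"
  shows "D * diag_inv D = 1\<^sub>m n"
proof (rule eq_matI)
  fix i j assume "i < dim_row (1\<^sub>m n :: real mat)" "j < dim_col (1\<^sub>m n :: real mat)"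
  then have i: "i < n" and j: "j < n" by auto
  have "(D * diag_inv D) $$ (i,j) = (\<Sum>l<n. D $$ (i,l) * diag_inv D $$ (l,j))"
    using i j D by (simp add: diag_inv_def scalar_prod_def lessThan_atLeast0)
  also have "\<dots> = (\<Sum>l<n. if l = j then D $$ (i,j) / D $$ (j,j) else 0)"
    by (rule sum.cong) (use D j in \<open>auto simp: diag_inv_def\<close>)
  also have "\<dots> = 1\<^sub>m n $$ (i,j)"
    using D i j nz[OF j] by (auto simp: sum.delta' diagonal_mat_def)
  finally show "(D * diag_inv D) $$ (i,j) = 1\<^sub>m n $$ (i,j)" .
qed (use D in \<open>auto simp: diag_inv_def\<close>)

lemma Omega2_carrier [simp]:
  "Om \<in> carrier_mat I I \<Longrightarrow> Omega2 I Om \<in> carrier_mat (2*I) (2*I)"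
  unfolding Omega2_def mult_2 by (rule four_block_carrier_mat) auto

lemma Omega2_index:
  assumes "Om \<in> carrier_mat I I" "i < 2*I" "j < 2*I"
  shows "Omega2 I Om $$ (i,j) =
    (if (i < I) = (j < I) then Om $$ (i mod I, j mod I) else 0)"
  using assms unfolding Omega2_def by (cases "i < I"; cases "j < I") (auto simp: mod_if)

lemma Omega2_mult_diag_inv:
  assumes Om: "Om \<in> carrier_mat I I" "diagonal_mat Om" "\<And>i. i < I \<Longrightarrow> Om $$ (i,i) \<noteq> 0"
  shows "Omega2 I Om * diag_inv (Omega2 I Om) = 1\<^sub>m (2*I)"
proof (rule mult_diag_inv)
  show "diagonal_mat (Omega2 I Om)"
    unfolding diagonal_mat_def
  proof (intro allI impI)
    fix i j assume "i < dim_row (Omega2 I Om)" "j < dim_col (Omega2 I Om)" "i \<noteq> j"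
    then show "Omega2 I Om $$ (i,j) = 0"
      using Om Omega2_carrier[OF Om(1)] by (auto simp: Omega2_index diagonal_mat_def mod_if)
  qed
  show "Omega2 I Om $$ (i,i) \<noteq> 0" if "i < 2*I" for i
    using Om that by (simp add: Omega2_index mod_less_divisor)
qed (use Om in simp)

lemma ones_append_zero_Omega2_scalar_prod:
  assumes Om: "Om \<in> carrier_mat I I" and u: "u \<in> carrier_vec I" and v: "v \<in> carrier_vec (2*I)"
  shows "(u @\<^sub>v 0\<^sub>v I) \<bullet> (Omega2 I Om *\<^sub>v v) = u \<bullet> (Om *\<^sub>v vec_first v I)"
proof -
  have v': "v = vec_first v I @\<^sub>v vec_last v I"
    using v by (simp add: mult_2 vec_first_last_append)
  have "Omega2 I Om *\<^sub>v v = (Om *\<^sub>v vec_first v I) @\<^sub>v (Om *\<^sub>v vec_last v I)"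
    unfolding Omega2_def by (subst v', rule mult_mat_vec_split[OF Om Om]) auto
  then show ?thesis
    using Om u by (simp add: scalar_prod_append[of _ I _ I])
qed

lemma closure_rhs_carrier:
  assumes "Om \<in> carrier_mat I I"
  shows "closure_rhs I B w Om fH k q a \<in> carrier_vec (2*I)"
proof -
  have "dim_row (diag_inv (Omega2 I Om)) = 2*I"
    using Omega2_carrier[OF assms] by (simp add: diag_inv_def)
  then show ?thesis
    unfolding closure_rhs_def Let_def carrier_vec_def
    by (simp only: mem_Collect_eq index_minus_vec(2) dim_mult_mat_vec)
qed

lemma Omega2_mult_diag_inv_mult_vec:
  assumes Om: "Om \<in> carrier_mat I I" "diagonal_mat Om" "\<And>i. i < I \<Longrightarrow> Om $$ (i,i) \<noteq> 0"
    and y: "y \<in> carrier_vec (2*I)"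
  shows "Omega2 I Om *\<^sub>v (diag_inv (Omega2 I Om) *\<^sub>v y) = y"
proof -
  have "diag_inv (Omega2 I Om) \<in> carrier_mat (2*I) (2*I)"
    using Omega2_carrier[OF Om(1)] unfolding diag_inv_def by auto
  then have "Omega2 I Om *\<^sub>v (diag_inv (Omega2 I Om) *\<^sub>v y) = (Omega2 I Om * diag_inv (Omega2 I Om)) *\<^sub>v y"
    using Om(1) y by (intro assoc_mult_mat_vec[symmetric, OF Omega2_carrier])
  then show ?thesis
    using y by (simp add: Omega2_mult_diag_inv[OF Om])
qed

lemma Omega2_mult_closure_rhs:
  assumes Om: "Om \<in> carrier_mat I I" "diagonal_mat Om" "\<And>i. i < I \<Longrightarrow> Om $$ (i,i) \<noteq> 0"
    and fH: "fH (vec_first a I) \<in> carrier_vec I"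
    and K: "k a \<in> carrier_mat (2*I) (2*I)" and Q: "q a \<in> carrier_mat (2*I) (2*I)"
    and a: "a \<in> carrier_vec (2*I)"
  shows "Omega2 I Om *\<^sub>v closure_rhs I B w Om fH k q a =
      Omega2 I Om *\<^sub>v (fH (vec_first a I) @\<^sub>v 0\<^sub>v I)
    + (transpose_mat (block_conv I B (w 2)) * k a * block_conv I B (w 3)
       - transpose_mat (block_conv I B (w 3)) * k a * block_conv I B (w 2)) *\<^sub>v a
    - (transpose_mat (block_conv I B (w 1)) * (q a * q a) * block_conv I B (w 1)) *\<^sub>v a"
    (is "_ = Omega2 I Om *\<^sub>v ?F + ?S *\<^sub>v a - ?D *\<^sub>v a")
proof -
  let ?Oi = "diag_inv (Omega2 I Om)"
  have Oi: "?Oi \<in> carrier_mat (2*I) (2*I)"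
    using Omega2_carrier[OF Om(1)] unfolding diag_inv_def by auto
  have F: "?F \<in> carrier_vec (2*I)"
    unfolding mult_2 using fH by (intro append_carrier_vec) simp_all
  have "?S \<in> carrier_mat (2*I) (2*I)" "?D \<in> carrier_mat (2*I) (2*I)"
    using K Q by (auto intro!: minus_carrier_mat mult_carrier_mat[of _ _ "2*I"])
  then have x: "?S *\<^sub>v a \<in> carrier_vec (2*I)" and y: "?D *\<^sub>v a \<in> carrier_vec (2*I)"
    using a by simp_all
  have "Omega2 I Om *\<^sub>v closure_rhs I B w Om fH k q a
      = Omega2 I Om *\<^sub>v (?F + ?Oi *\<^sub>v (?S *\<^sub>v a) - ?Oi *\<^sub>v (?D *\<^sub>v a))"
    unfolding closure_rhs_def Let_def ..
  also have "\<dots> = Omega2 I Om *\<^sub>v ?F + ?S *\<^sub>v a - ?D *\<^sub>v a"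
    using Omega2_carrier[OF Om(1)] F mult_mat_vec_carrier[OF Oi x] mult_mat_vec_carrier[OF Oi y]
      Omega2_mult_diag_inv_mult_vec[OF Om x] Omega2_mult_diag_inv_mult_vec[OF Om y]
    by (simp add: mult_minus_distrib_mat_vec[of _ "2*I" "2*I"] mult_add_distrib_mat_vec[of _ "2*I" "2*I"])
  finally show ?thesis .
qed

lemma closure_rhs_momentum:
  assumes zs: "\<And>m. m \<in> {1,2,3} \<Longrightarrow> zero_sum B (w m 1 1) \<and> zero_sum B (w m 2 1)"
    and Om: "Om \<in> carrier_mat I I" "diagonal_mat Om" "\<And>i. i < I \<Longrightarrow> Om $$ (i,i) \<noteq> 0"
    and fH: "fH (vec_first a I) \<in> carrier_vec I" "ones_vec I \<bullet> (Om *\<^sub>v fH (vec_first a I)) = 0"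
    and K: "k a \<in> carrier_mat (2*I) (2*I)" and Q: "q a \<in> carrier_mat (2*I) (2*I)"
    and a: "a \<in> carrier_vec (2*I)"
  shows "(ones_vec I @\<^sub>v 0\<^sub>v I) \<bullet> (Omega2 I Om *\<^sub>v closure_rhs I B w Om fH k q a) = 0"
proof -
  define e where "e = ones_vec I @\<^sub>v 0\<^sub>v I"
  define \<B> where "\<B> m = block_conv I B (w m)" for m
  define F where "F = fH (vec_first a I) @\<^sub>v 0\<^sub>v I"
  define S\<^sub>1 where "S\<^sub>1 = transpose_mat (\<B> 2) * k a * \<B> 3"
  define S\<^sub>2 where "S\<^sub>2 = transpose_mat (\<B> 3) * k a * \<B> 2"
  define D where "D = transpose_mat (\<B> 1) * (q a * q a) * \<B> 1"
  have e: "e \<in> carrier_vec (2*I)"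
    unfolding e_def mult_2 by (rule append_carrier_vec) simp_all
  have F: "F \<in> carrier_vec (2*I)"
    unfolding F_def mult_2 using fH by (intro append_carrier_vec) simp_all
  have \<B>: "\<B> m \<in> carrier_mat (2*I) (2*I)" for m
    unfolding \<B>_def by simp
  have S\<^sub>1: "S\<^sub>1 \<in> carrier_mat (2*I) (2*I)" and S\<^sub>2: "S\<^sub>2 \<in> carrier_mat (2*I) (2*I)"
    and D: "D \<in> carrier_mat (2*I) (2*I)"
    unfolding S\<^sub>1_def S\<^sub>2_def D_def using \<B> K Q by (auto intro!: mult_carrier_mat[of _ _ "2*I"])
  have \<B>_e: "\<B> m *\<^sub>v e = 0\<^sub>v (2*I)" if "m \<in> {1,2,3}" for m
    unfolding \<B>_def e_def using zs[OF that] by (intro block_conv_mult_ones_append_zero) auto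
  have e_S: "e \<bullet> (S\<^sub>1 *\<^sub>v a) = 0" "e \<bullet> (S\<^sub>2 *\<^sub>v a) = 0" and e_D: "e \<bullet> (D *\<^sub>v a) = 0"
    unfolding S\<^sub>1_def S\<^sub>2_def D_def using \<B> \<B>_e K Q a e
    by (auto intro!: scalar_prod_transpose_mult_eq_0[of _ "2*I" "2*I"])
  have e_F: "e \<bullet> (Omega2 I Om *\<^sub>v F) = 0"
    using ones_append_zero_Omega2_scalar_prod[OF Om(1) ones_vec_carrier F] fH
    by (simp add: e_def F_def)
  have "Omega2 I Om *\<^sub>v closure_rhs I B w Om fH k q a
      = Omega2 I Om *\<^sub>v F + (S\<^sub>1 - S\<^sub>2) *\<^sub>v a - D *\<^sub>v a"
    unfolding F_def S\<^sub>1_def S\<^sub>2_def D_def \<B>_def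
    using Om fH(1) K Q a by (rule Omega2_mult_closure_rhs)
  then show ?thesis
    using e_S e_D e_F e S\<^sub>1 S\<^sub>2 D a mult_mat_vec_carrier[OF Omega2_carrier[OF Om(1)] F]
    by (simp add: e_def[symmetric] minus_mult_distrib_mat_vec[OF S\<^sub>1 S\<^sub>2 a]
        scalar_prod_add_distrib[of _ "2*I"] scalar_prod_minus_distrib[of _ "2*I"])
qed

theorem mainTheorem3:
  fixes I B :: nat
    and w :: "nat \<Rightarrow> nat \<Rightarrow> nat \<Rightarrow> int \<Rightarrow> real"
    and Om :: "real mat"
    and fH :: "real vec \<Rightarrow> real vec"
    and k q :: "real vec \<Rightarrow> real mat"
  assumes "I \<ge> 1" and "B \<ge> 1"
    and zs: "\<forall>m\<in>{1,2,3}. zero_sum B (w m 1 1) \<and> zero_sum B (w m 2 1)"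
    and Om: "Om \<in> carrier_mat I I" "diagonal_mat Om" "\<forall>i<I. Om $$ (i,i) > 0"
    and fH: "\<forall>u\<in>carrier_vec I. fH u \<in> carrier_vec I \<and> ones_vec I \<bullet> (Om *\<^sub>v fH u) = 0"
    and k: "\<forall>a\<in>carrier_vec (2*I). k a \<in> carrier_mat (2*I) (2*I) \<and> diagonal_mat (k a)"
    and q: "\<forall>a\<in>carrier_vec (2*I). q a \<in> carrier_mat (2*I) (2*I) \<and> diagonal_mat (q a)"
  shows "(\<forall>a\<in>carrier_vec (2*I).
            (ones_vec I @\<^sub>v 0\<^sub>v I) \<bullet> (Omega2 I Om *\<^sub>v closure_rhs I B w Om fH k q a) = 0)
       \<and> (\<forall>(a :: real \<Rightarrow> real vec) t0 t1. t0 \<le> t1 \<longrightarrow>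
            (\<forall>t\<in>{t0..t1}. a t \<in> carrier_vec (2*I) \<and>
               (\<forall>i<2*I. ((\<lambda>s. a s $ i) has_real_derivative
                          (closure_rhs I B w Om fH k q (a t) $ i)) (at t within {t0..t1}))) \<longrightarrow>
            ones_vec I \<bullet> (Om *\<^sub>v vec_first (a t1) I) = ones_vec I \<bullet> (Om *\<^sub>v vec_first (a t0) I))"
proof (intro conjI ballI allI impI)
  let ?G = "closure_rhs I B w Om fH k q"
  let ?e = "ones_vec I @\<^sub>v 0\<^sub>v I"
  have e: "?e \<in> carrier_vec (2*I)"
    unfolding mult_2 by (rule append_carrier_vec) simp_all
  show rhs_momentum: "?e \<bullet> (Omega2 I Om *\<^sub>v ?G a) = 0" if "a \<in> carrier_vec (2*I)" for a
    using that zs Om fH k q by (intro closure_rhs_momentum) auto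
  have O2: "Omega2 I Om \<in> carrier_mat (2*I) (2*I)"
    using Om(1) by (rule Omega2_carrier)
  define c where "c = transpose_mat (Omega2 I Om) *\<^sub>v ?e"
  have c: "c \<in> carrier_vec (2*I)"
    unfolding c_def using O2 e by (intro mult_mat_vec_carrier[of _ _ "2*I"]) simp_all
  have momentum_linear: "?e \<bullet> (Omega2 I Om *\<^sub>v x) = x \<bullet> c" if x: "x \<in> carrier_vec (2*I)" for x
    using transpose_vec_mult_scalar[OF O2 x e] comm_scalar_prod[OF c x] by (simp add: c_def)
  fix a :: "real \<Rightarrow> real vec" and t0 t1 :: real
  assume "t0 \<le> t1" and sol: "\<forall>t\<in>{t0..t1}. a t \<in> carrier_vec (2*I) \<and>
    (\<forall>i<2*I. ((\<lambda>s. a s $ i) has_real_derivative ?G (a t) $ i) (at t within {t0..t1}))"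
  have "a t1 \<bullet> c = a t0 \<bullet> c"
  proof (rule scalar_prod_constant_if_derivative_orthogonal[OF \<open>t0 \<le> t1\<close> c])
    show "?G (a t) \<bullet> c = 0" if "t \<in> {t0..t1}" for t
      using momentum_linear[OF closure_rhs_carrier[OF Om(1)]] rhs_momentum sol that by simp
  qed (use sol in auto)
  then show "ones_vec I \<bullet> (Om *\<^sub>v vec_first (a t1) I) = ones_vec I \<bullet> (Om *\<^sub>v vec_first (a t0) I)"
    using momentum_linear sol \<open>t0 \<le> t1\<close>
    by (simp add: ones_append_zero_Omega2_scalar_prod[OF Om(1) ones_vec_carrier])
qed

end
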